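(* Let $0<\beta<1$, $p=\lceil\beta^{-1}\rceil-1$, and let $s,t$ be integers with $2\le t<s\le p+1$. Let $G$ be a graph of order $n$ with minimum degree $(1-\beta)n$. Then for every $S\in\mathcal{K}_s$, $$\sum_{T\in\mathcal{K}_t(S)}D_-(T)\ \ge\ (1-\beta)s\binom{s-2}{t-1}-(t-1)\binom{s-1}{t}+\binom{s-2}{t-2}D_-(S).$$ In particular, for $2\le t\le p$ and $S\in\mathcal{K}_{t+1}$, $\widetilde D(S)\ge 0$, where $\widetilde D(S)=\sum_{T\in\mathcal{K}_t(S)}D_-(T)-\big(2-(t+1)\beta+(t-1)D_-(S)\big)$.
   Context: All graphs are finite and simple. For a graph $G$, $\mathcal{K}_t$ denotes the set of $t$-cliques of $G$ (identified with their vertex sets); for a clique $S$, $\mathcal{K}_t(S)$ is the set of $t$-cliques contained in $S$. The degree $d(T)$ of a $t$-clique $T$ is the number of $(t+1)$-cliques containing $T$, and $D(T)=d(T)/n$ where $n=|V(G)|$. For $0<\beta<1$ with $p=\lceil\beta^{-1}\rceil-1$, and $T\in\mathcal{K}_t$ with $1\le t\le p+1$, define $D_-(T)=\min\{D(T),(p-t+1)\beta\}$. *)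

theory Defs
  imports Complex_Main
begin

text \<open>A finite simple graph is given by a finite vertex set V and a symmetric,
irreflexive adjacency relation E (only its restriction to V matters).\<close>

definition is_clique :: "('a \<Rightarrow> 'a \<Rightarrow> bool) \<Rightarrow> 'a set \<Rightarrow> bool" where
  "is_clique E S \<longleftrightarrow> (\<forall>x\<in>S. \<forall>y\<in>S. x \<noteq> y \<longrightarrow> E x y)"

definition cliques :: "'a set \<Rightarrow> ('a \<Rightarrow> 'a \<Rightarrow> bool) \<Rightarrow> nat \<Rightarrow> 'a set set" where
  "cliques V E t = {S. S \<subseteq> V \<and> finite S \<and> card S = t \<and> is_clique E S}"

definition cliques_in :: "'a set \<Rightarrow> ('a \<Rightarrow> 'a \<Rightarrow> bool) \<Rightarrow> nat \<Rightarrow> 'a set \<Rightarrow> 'a set set" where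
  "cliques_in V E t S = {T \<in> cliques V E t. T \<subseteq> S}"

definition clique_deg :: "'a set \<Rightarrow> ('a \<Rightarrow> 'a \<Rightarrow> bool) \<Rightarrow> 'a set \<Rightarrow> nat" where
  "clique_deg V E T = card {S \<in> cliques V E (card T + 1). T \<subseteq> S}"

definition Dnorm :: "'a set \<Rightarrow> ('a \<Rightarrow> 'a \<Rightarrow> bool) \<Rightarrow> 'a set \<Rightarrow> real" where
  "Dnorm V E T = real (clique_deg V E T) / real (card V)"

definition pval :: "real \<Rightarrow> nat" where
  "pval \<beta> = nat (\<lceil>1 / \<beta>\<rceil> - 1)"

definition Dminus :: "real \<Rightarrow> 'a set \<Rightarrow> ('a \<Rightarrow> 'a \<Rightarrow> bool) \<Rightarrow> 'a set \<Rightarrow> real" where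
  "Dminus \<beta> V E T = min (Dnorm V E T) ((real (pval \<beta>) - real (card T) + 1) * \<beta>)"

definition Dtilde :: "real \<Rightarrow> 'a set \<Rightarrow> ('a \<Rightarrow> 'a \<Rightarrow> bool) \<Rightarrow> nat \<Rightarrow> 'a set \<Rightarrow> real" where
  "Dtilde \<beta> V E t S = (\<Sum>T\<in>cliques_in V E t S. Dminus \<beta> V E T)
      - (2 - real (t + 1) * \<beta> + real (t - 1) * Dminus \<beta> V E S)"

end

theory Submission
  imports Defs
begin

(* (1) The facet inequality (t = s - 1): for a (t+1)-clique S,
         sum_{v in S} D_-(S - v) >= 2 - (t+1) beta + (t-1) D_-(S).
       For w in V let A(w) be the set of non-neighbours of w inside S; then
       n D(S) counts the w with A(w) empty and n D(S - v) those with
       A(w) contained in {v}.  Splitting S into the vertices C whose facet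
       degree reaches the cap (p - t + 1) beta and the rest U, a pointwise
       count over w, summed over V, bounds the relevant quantities, and an
       elementary case distinction on |U| yields the inequality.

   (2) The general bound follows by descending induction on t from t = s.
       Double counting expresses (s - t) sum_{K_t(S)} D_- as a sum over the
       (t+1)-subcliques R of S of sum_{K_t(R)} D_-; applying (1) to each R and
       the induction hypothesis, a binomial identity closes the step. *)

lemma is_clique_subset: "is_clique E S \<Longrightarrow> T \<subseteq> S \<Longrightarrow> is_clique E T"
  unfolding is_clique_def by blast

lemma cliques_in_of_clique:
  assumes "S \<in> cliques V E s"
  shows "cliques_in V E t S = {T. T \<subseteq> S \<and> card T = t}"
  using assms unfolding cliques_in_def cliques_def
  by (auto intro: finite_subset is_clique_subset)

lemma card_Suc_superset:
  assumes "finite T" "T \<subseteq> R" "card R = Suc (card T)"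
  obtains x where "x \<notin> T" "R = insert x T"
proof -
  have "card (R - T) = 1" using assms by (simp add: card_Diff_subset)
  then obtain x where "R - T = {x}" by (rule card_1_singletonE)
  then show ?thesis using that \<open>T \<subseteq> R\<close> by blast
qed

lemma card_one_point_extensions:
  assumes "finite S" "T \<subseteq> S"
  shows "card {R. R \<subseteq> S \<and> card R = Suc (card T) \<and> T \<subseteq> R} = card S - card T"
proof -
  have finT: "finite T" using assms finite_subset by blast
  have "{R. R \<subseteq> S \<and> card R = Suc (card T) \<and> T \<subseteq> R} = (\<lambda>x. insert x T) ` (S - T)"
  proof (intro equalityI subsetI)
    fix R assume "R \<in> {R. R \<subseteq> S \<and> card R = Suc (card T) \<and> T \<subseteq> R}"
    then obtain x where "x \<notin> T" "R = insert x T" "R \<subseteq> S"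
      using card_Suc_superset[OF finT] by blast
    then show "R \<in> (\<lambda>x. insert x T) ` (S - T)" by blast
  qed (use assms finT in auto)
  moreover have "inj_on (\<lambda>x. insert x T) (S - T)" by (rule inj_onI) auto
  ultimately show ?thesis using assms by (simp add: card_image card_Diff_subset finT)
qed

(* Double counting pairs T of size t inside R of size t+1 inside S: each T lies in
   |S| - t such R. *)
lemma double_count_subsets:
  fixes f :: "'a set \<Rightarrow> 'b::comm_semiring_1"
  assumes "finite S"
  shows "(\<Sum>R\<in>{R. R \<subseteq> S \<and> card R = Suc t}. \<Sum>T\<in>{T. T \<subseteq> R \<and> card T = t}. f T)
       = of_nat (card S - t) * (\<Sum>T\<in>{T. T \<subseteq> S \<and> card T = t}. f T)"
proof -
  let ?R = "{R. R \<subseteq> S \<and> card R = Suc t}" and ?T = "{T. T \<subseteq> S \<and> card T = t}"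
  have fin: "finite ?R" "finite ?T" using assms by (auto intro: finite_subset[of _ "Pow S"])
  have "(\<Sum>R\<in>?R. \<Sum>T\<in>{T. T \<subseteq> R \<and> card T = t}. f T)
      = (\<Sum>R\<in>?R. \<Sum>T\<in>{T. T \<in> ?T \<and> T \<subseteq> R}. f T)"
    by (intro sum.cong refl arg_cong[where f = "sum f"]) auto
  also have "\<dots> = (\<Sum>T\<in>?T. \<Sum>R\<in>{R. R \<in> ?R \<and> T \<subseteq> R}. f T)"
    by (rule sum.swap_restrict[OF fin])
  also have "\<dots> = (\<Sum>T\<in>?T. of_nat (card S - t) * f T)"
  proof (rule sum.cong[OF refl])
    fix T assume T: "T \<in> ?T"
    then have "{R. R \<in> ?R \<and> T \<subseteq> R} = {R. R \<subseteq> S \<and> card R = Suc (card T) \<and> T \<subseteq> R}"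
      by auto
    then have "card {R. R \<in> ?R \<and> T \<subseteq> R} = card S - t"
      using card_one_point_extensions[OF assms, of T] T by simp
    then show "(\<Sum>R\<in>{R. R \<in> ?R \<and> T \<subseteq> R}. f T) = of_nat (card S - t) * f T" by simp
  qed
  finally show ?thesis by (simp add: sum_distrib_left)
qed

lemma facets_eq:
  assumes "finite S" "card S = Suc t"
  shows "{T. T \<subseteq> S \<and> card T = t} = (\<lambda>v. S - {v}) ` S"
proof (intro equalityI subsetI)
  fix T assume "T \<in> {T. T \<subseteq> S \<and> card T = t}"
  then have T: "T \<subseteq> S" "card S = Suc (card T)" "finite T"
    using assms finite_subset by auto
  obtain v where "v \<notin> T" "S = insert v T" by (rule card_Suc_superset[OF T(3,1,2)])
  then show "T \<in> (\<lambda>v. S - {v}) ` S" by blast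
next
  fix T assume "T \<in> (\<lambda>v. S - {v}) ` S"
  then show "T \<in> {T. T \<subseteq> S \<and> card T = t}" using assms by auto
qed

(* The degree of a clique is the size of its common neighbourhood: the (|T|+1)-cliques
   containing T are exactly T + w for common neighbours w. *)
lemma clique_deg_common_neighbours:
  assumes symE: "\<And>x y. E x y \<Longrightarrow> E y x" and irrE: "\<And>x. \<not> E x x"
    and T: "T \<subseteq> V" "finite T" "is_clique E T"
  shows "clique_deg V E T = card {w\<in>V. \<forall>x\<in>T. E w x}"
proof -
  let ?N = "{w\<in>V. \<forall>x\<in>T. E w x}"
  have "{R \<in> cliques V E (card T + 1). T \<subseteq> R} = (\<lambda>w. insert w T) ` ?N"
  proof (intro equalityI subsetI)
    fix R assume "R \<in> {R \<in> cliques V E (card T + 1). T \<subseteq> R}"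
    then have R: "R \<subseteq> V" "is_clique E R" "T \<subseteq> R" "card R = Suc (card T)"
      unfolding cliques_def by auto
    obtain w where w: "w \<notin> T" "R = insert w T" by (rule card_Suc_superset[OF T(2) R(3,4)])
    have "\<forall>x\<in>T. E w x" using R(2) w(1) unfolding w(2) is_clique_def by auto
    then show "R \<in> (\<lambda>w. insert w T) ` ?N" using R(1) w by blast
  next
    fix R assume "R \<in> (\<lambda>w. insert w T) ` ?N"
    then obtain w where w: "w \<in> V" "\<forall>x\<in>T. E w x" and R: "R = insert w T" by blast
    have "w \<notin> T" using w irrE by blast
    moreover have "is_clique E R" using T(3) w symE unfolding R is_clique_def by blast
    ultimately show "R \<in> {R \<in> cliques V E (card T + 1). T \<subseteq> R}"
      using w T unfolding R cliques_def by auto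
  qed
  moreover have "inj_on (\<lambda>w. insert w T) ?N"
    by (rule inj_onI) (use irrE in blast)
  ultimately show ?thesis unfolding clique_deg_def by (simp add: card_image)
qed

lemma pval_bound:
  assumes "0 < \<beta>"
  shows "1 \<le> (real (pval \<beta>) + 1) * \<beta>"
proof -
  have "1 \<le> \<lceil>1/\<beta>\<rceil>" using assms by simp
  then have "1/\<beta> \<le> real (pval \<beta>) + 1" unfolding pval_def by linarith
  then show ?thesis using assms by (simp add: field_simps)
qed

lemma cover_pointwise_two:
  assumes "finite C" "finite U" "C \<inter> U = {}" "X \<subseteq> C \<union> U"
  shows "(2::real) \<le> 2 * of_bool (X = {}) + (\<Sum>v\<in>U. of_bool (X = {v}))
           + 2 * (\<Sum>x\<in>C. of_bool (x \<in> X)) + (\<Sum>x\<in>U. of_bool (x \<in> X))"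
proof -
  have "finite X" using assms finite_subset by blast
  consider "X = {}" | "C \<inter> X \<noteq> {}" | v where "v \<in> U" "X = {v}" | "X \<subseteq> U" "2 \<le> card X"
  proof (cases "X = {} \<or> C \<inter> X \<noteq> {}")
    case False
    then have "X \<subseteq> U" "X \<noteq> {}" using assms(4) by auto
    show ?thesis
    proof (cases "2 \<le> card X")
      case False
      moreover have "0 < card X" using \<open>X \<noteq> {}\<close> \<open>finite X\<close> by (simp add: card_gt_0_iff)
      ultimately have "card X = 1" by linarith
      then obtain v where "X = {v}" by (rule card_1_singletonE)
      then show ?thesis using that \<open>X \<subseteq> U\<close> by blast
    qed (use that \<open>X \<subseteq> U\<close> in blast)
  qed blast
  then show ?thesis
  proof cases
    case 2
    then have "1 \<le> card (C \<inter> X)" using assms(1) by (simp add: Suc_le_eq card_gt_0_iff)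
    then show ?thesis using assms by simp
  next
    case (3 v)
    then have "U \<inter> {u. X = {u}} = {v}" "U \<inter> X = {v}" by auto
    then show ?thesis using assms by simp
  next
    case 4
    then have "U \<inter> X = X" by blast
    then show ?thesis using 4 assms by simp
  qed simp
qed

lemma cover_pointwise_one:
  assumes "finite C" "finite U" "card U \<le> 1" "X \<subseteq> C \<union> U"
  shows "(1::real) \<le> of_bool (X = {}) + (\<Sum>v\<in>U. of_bool (X = {v})) + (\<Sum>x\<in>C. of_bool (x \<in> X))"
proof -
  consider "X = {}" | "C \<inter> X \<noteq> {}" | v where "v \<in> U" "X = {v}"
  proof (cases "X = {} \<or> C \<inter> X \<noteq> {}")
    case False
    then obtain v where v: "v \<in> X" "X \<subseteq> U" using assms(4) by blast
    then have "U = {v}" using assms(2,3) card_le_Suc0_iff_eq[of U] by auto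
    then show ?thesis using that v by blast
  qed blast
  then show ?thesis
  proof cases
    case 2
    then have "1 \<le> card (C \<inter> X)" using assms(1) by (simp add: Suc_le_eq card_gt_0_iff)
    then show ?thesis using assms by simp
  next
    case (3 v)
    then have "U \<inter> {u. X = {u}} = {v}" by auto
    then show ?thesis using assms by simp
  qed simp
qed

lemma cover_count:
  fixes A :: "'v \<Rightarrow> 'a set" and b :: real
  assumes fin: "finite W" "finite C" "finite U" and disj: "C \<inter> U = {}"
    and sub: "\<And>w. w \<in> W \<Longrightarrow> A w \<subseteq> C \<union> U"
    and few: "\<forall>x\<in>C \<union> U. real (card {w\<in>W. x \<in> A w}) \<le> b"
  defines "N0 \<equiv> real (card {w\<in>W. A w = {}})"
    and "N1 \<equiv> (\<Sum>v\<in>U. real (card {w\<in>W. A w = {v}}))"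
  shows "2 * real (card W) \<le> 2 * N0 + N1 + (2 * real (card C) + real (card U)) * b"
    and "card U \<le> 1 \<Longrightarrow> real (card W) \<le> N0 + N1 + real (card C) * b"
proof -
  have count: "(\<Sum>w\<in>W. of_bool (P w)) = real (card {w\<in>W. P w})" for P
    using fin(1) by (simp add: Int_def)
  have swap: "(\<Sum>w\<in>W. \<Sum>x\<in>Y. of_bool (P x w)) = (\<Sum>x\<in>Y. real (card {w\<in>W. P x w}))"
    for Y and P :: "'a \<Rightarrow> 'v \<Rightarrow> bool"
    by (subst sum.swap) (simp add: count)
  have bound: "(\<Sum>x\<in>Y. real (card {w\<in>W. x \<in> A w})) \<le> real (card Y) * b" if "Y \<subseteq> C \<union> U" for Y
    using sum_bounded_above[of Y "\<lambda>x. real (card {w\<in>W. x \<in> A w})" b] few that by blast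
  have "2 * real (card W) = (\<Sum>w\<in>W. 2)" by simp
  also have "\<dots> \<le> (\<Sum>w\<in>W. 2 * of_bool (A w = {}) + (\<Sum>v\<in>U. of_bool (A w = {v}))
           + 2 * (\<Sum>x\<in>C. of_bool (x \<in> A w)) + (\<Sum>x\<in>U. of_bool (x \<in> A w)))"
    by (intro sum_mono cover_pointwise_two fin disj sub)
  also have "\<dots> = 2 * N0 + N1 + 2 * (\<Sum>x\<in>C. real (card {w\<in>W. x \<in> A w}))
           + (\<Sum>x\<in>U. real (card {w\<in>W. x \<in> A w}))"
    unfolding N0_def N1_def by (simp add: sum.distrib swap count flip: sum_distrib_left)
  also have "\<dots> \<le> 2 * N0 + N1 + (2 * real (card C) + real (card U)) * b"
    using bound[of C] bound[of U] by (simp add: algebra_simps)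
  finally show "2 * real (card W) \<le> 2 * N0 + N1 + (2 * real (card C) + real (card U)) * b" .
  assume "card U \<le> 1"
  have "real (card W) = (\<Sum>w\<in>W. 1)" by simp
  also have "\<dots> \<le> (\<Sum>w\<in>W. of_bool (A w = {}) + (\<Sum>v\<in>U. of_bool (A w = {v}))
           + (\<Sum>x\<in>C. of_bool (x \<in> A w)))"
    by (intro sum_mono cover_pointwise_one fin \<open>card U \<le> 1\<close> sub)
  also have "\<dots> = N0 + N1 + (\<Sum>x\<in>C. real (card {w\<in>W. x \<in> A w}))"
    unfolding N0_def N1_def by (simp add: sum.distrib swap count)
  also have "\<dots> \<le> N0 + N1 + real (card C) * b"
    using bound[of C] by simp
  finally show "real (card W) \<le> N0 + N1 + real (card C) * b" .
qed

(* The final arithmetic of the facet inequality: k = |C|, mu = |U|, y = D(S), q the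
   extra mass of the facets in U, c the truncation level of t-cliques. *)
lemma facet_arith:
  fixes k \<mu> t :: nat and y q c \<beta> :: real
  assumes "k + \<mu> = t + 1" "1 \<le> t" "0 \<le> q" "1 \<le> c + real t * \<beta>"
    and two: "2 \<le> 2 * y + q + (2 * real k + real \<mu>) * \<beta>"
    and one: "\<mu> \<le> 1 \<Longrightarrow> 1 \<le> y + q + real k * \<beta>"
  shows "2 - real (t + 1) * \<beta> + real (t - 1) * min y (c - \<beta>) \<le> real k * c + real \<mu> * y + q"
proof -
  define m where "m = min y (c - \<beta>)"
  have m: "m \<le> y" "m \<le> c - \<beta>" unfolding m_def by auto
  have t: "real (t + 1) = real t + 1" "real (t - 1) = real t - 1" using assms(2) by auto
  consider "\<mu> = 0" | "\<mu> = 1" | "2 \<le> \<mu>" by linarith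
  then have "2 - (real t + 1) * \<beta> + (real t - 1) * m \<le> real k * c + real \<mu> * y + q"
  proof cases
    case 1
    then have "real k = real t + 1" using assms(1) by simp
    moreover have "0 \<le> (real t - 1) * (c - \<beta> - m)" using assms(2) m by simp
    ultimately show ?thesis using 1 assms(3,4) by (simp add: algebra_simps)
  next
    case 2
    then have "real k = real t" using assms(1) by simp
    moreover have "0 \<le> (real t - 1) * (c - \<beta> - m)" using assms(2) m by simp
    ultimately show ?thesis using 2 one assms(4) by (simp add: algebra_simps)
  next
    case 3
    have tk: "real t = real k + real \<mu> - 1" using assms(1) by (metis add_diff_cancel_right' of_nat_add of_nat_1)
    have "real k * c + real \<mu> * y + q - (2 - (real t + 1) * \<beta> + (real t - 1) * m)
      = (2 * y + q + (2 * real k + real \<mu>) * \<beta> - 2) + real k * (c - \<beta> - m) + (real \<mu> - 2) * (y - m)"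
      unfolding tk by (simp add: algebra_simps)
    moreover have "0 \<le> real k * (c - \<beta> - m)" "0 \<le> (real \<mu> - 2) * (y - m)" using 3 m by simp_all
    ultimately show ?thesis using two by linarith
  qed
  then show ?thesis unfolding m_def t .
qed

lemma facet_sum:
  assumes S: "S \<in> cliques V E (Suc t)"
  shows "(\<Sum>T\<in>cliques_in V E t S. Dminus \<beta> V E T)
       = (\<Sum>v\<in>S. min (Dnorm V E (S - {v})) ((real (pval \<beta>) - real t + 1) * \<beta>))"
proof -
  have finS: "finite S" and cardS: "card S = Suc t" using S unfolding cliques_def by auto
  have "cliques_in V E t S = (\<lambda>v. S - {v}) ` S"
    using cliques_in_of_clique[OF S] facets_eq[OF finS cardS] by simp
  moreover have "inj_on (\<lambda>v. S - {v}) S" by (rule inj_onI) auto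
  ultimately show ?thesis using finS cardS by (simp add: sum.reindex Dminus_def)
qed

lemma sum_min_split:
  fixes g :: "'a \<Rightarrow> real"
  assumes "finite S"
  shows "(\<Sum>v\<in>S. min (g v) c) = real (card {v\<in>S. c \<le> g v}) * c + (\<Sum>v\<in>{v\<in>S. \<not> c \<le> g v}. g v)"
proof -
  have "(\<Sum>v\<in>S. min (g v) c)
      = (\<Sum>v\<in>{v\<in>S. c \<le> g v}. min (g v) c) + (\<Sum>v\<in>{v\<in>S. \<not> c \<le> g v}. min (g v) c)"
    using assms by (subst sum.union_disjoint[symmetric]) (auto intro: sum.cong)
  moreover have "(\<Sum>v\<in>{v\<in>S. c \<le> g v}. min (g v) c) = (\<Sum>v\<in>{v\<in>S. c \<le> g v}. c)"
    by (rule sum.cong) auto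
  moreover have "(\<Sum>v\<in>{v\<in>S. \<not> c \<le> g v}. min (g v) c) = (\<Sum>v\<in>{v\<in>S. \<not> c \<le> g v}. g v)"
    by (rule sum.cong) auto
  ultimately show ?thesis by simp
qed

lemma Dnorm_via_non_neighbours:
  assumes symE: "\<And>x y. E x y \<Longrightarrow> E y x" and irrE: "\<And>x. \<not> E x x"
    and S: "S \<in> cliques V E s" and T: "T \<subseteq> S"
  shows "Dnorm V E T = real (card {w\<in>V. {x\<in>S. \<not> E w x} \<inter> T = {}}) / real (card V)"
proof -
  have "T \<subseteq> V" "finite T" "is_clique E T"
    using S T unfolding cliques_def by (auto intro: finite_subset is_clique_subset)
  then have "clique_deg V E T = card {w\<in>V. \<forall>x\<in>T. E w x}"
    using clique_deg_common_neighbours[of E T V] symE irrE by blast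
  also have "{w\<in>V. \<forall>x\<in>T. E w x} = {w\<in>V. {x\<in>S. \<not> E w x} \<inter> T = {}}" using T by auto
  finally show ?thesis unfolding Dnorm_def by simp
qed

lemma facet_Dnorm:
  assumes finV: "finite V" and symE: "\<And>x y. E x y \<Longrightarrow> E y x" and irrE: "\<And>x. \<not> E x x"
    and S: "S \<in> cliques V E s"
  shows "Dnorm V E S = real (card {w\<in>V. {x\<in>S. \<not> E w x} = {}}) / real (card V)"
    and "v \<in> S \<Longrightarrow> Dnorm V E (S - {v})
           = Dnorm V E S + real (card {w\<in>V. {x\<in>S. \<not> E w x} = {v}}) / real (card V)"
proof -
  let ?A = "\<lambda>w. {x\<in>S. \<not> E w x}"
  show DS: "Dnorm V E S = real (card {w\<in>V. ?A w = {}}) / real (card V)"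
    using Dnorm_via_non_neighbours[OF symE irrE S subset_refl] by (simp add: Int_absorb2)
  assume "v \<in> S"
  have split: "{w\<in>V. ?A w \<inter> (S - {v}) = {}} = {w\<in>V. ?A w = {}} \<union> {w\<in>V. ?A w = {v}}"
    by auto
  have "card {w\<in>V. ?A w \<inter> (S - {v}) = {}} = card {w\<in>V. ?A w = {}} + card {w\<in>V. ?A w = {v}}"
    unfolding split using finV by (intro card_Un_disjoint) auto
  then show "Dnorm V E (S - {v}) = Dnorm V E S + real (card {w\<in>V. ?A w = {v}}) / real (card V)"
    using Dnorm_via_non_neighbours[OF symE irrE S, of "S - {v}"] DS by (simp add: add_divide_distrib)
qed

lemma non_neighbours_bound:
  assumes finV: "finite V" and symE: "\<And>x y. E x y \<Longrightarrow> E y x"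
    and mindeg: "\<And>v. v \<in> V \<Longrightarrow> real (card {u \<in> V. E v u}) \<ge> (1 - \<beta>) * real (card V)"
    and x: "x \<in> V"
  shows "real (card {w\<in>V. \<not> E w x}) \<le> \<beta> * real (card V)"
proof -
  have "{w\<in>V. \<not> E w x} = V - {u\<in>V. E x u}" using symE by auto
  then have "real (card {w\<in>V. \<not> E w x}) = real (card V) - real (card {u\<in>V. E x u})"
    using finV by (simp add: card_Diff_subset of_nat_diff card_mono)
  then show ?thesis using mindeg[OF x] by (simp add: algebra_simps)
qed

lemma facet_inequality:
  fixes V :: "'a set" and E :: "'a \<Rightarrow> 'a \<Rightarrow> bool" and \<beta> :: real
  assumes finV: "finite V" and symE: "\<And>x y. E x y \<Longrightarrow> E y x" and irrE: "\<And>x. \<not> E x x"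
    and bpos: "0 < \<beta>"
    and mindeg: "\<And>v. v \<in> V \<Longrightarrow> real (card {u \<in> V. E v u}) \<ge> (1 - \<beta>) * real (card V)"
    and S: "S \<in> cliques V E (Suc t)" and t1: "1 \<le> t"
  shows "2 - real (t + 1) * \<beta> + real (t - 1) * Dminus \<beta> V E S
           \<le> (\<Sum>T\<in>cliques_in V E t S. Dminus \<beta> V E T)"
proof -
  define n where "n = real (card V)"
  define c where "c = (real (pval \<beta>) - real t + 1) * \<beta>"
  define A where "A w = {x\<in>S. \<not> E w x}" for w
  define C where "C = {v\<in>S. c \<le> Dnorm V E (S - {v})}"
  define U where "U = {v\<in>S. \<not> c \<le> Dnorm V E (S - {v})}"
  define y where "y = real (card {w\<in>V. A w = {}}) / n"
  define q where "q = (\<Sum>v\<in>U. real (card {w\<in>V. A w = {v}})) / n"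
  have SV: "S \<subseteq> V" and finS: "finite S" and cardS: "card S = Suc t"
    using S unfolding cliques_def by auto
  have npos: "0 < n" unfolding n_def using finV SV cardS by (auto simp: card_gt_0_iff)
  have CU: "finite C" "finite U" "C \<inter> U = {}" "C \<union> U = S"
    using finS unfolding C_def U_def by auto
  have cardCU: "card C + card U = t + 1"
    using card_Un_disjoint[OF CU(1-3)] CU(4) cardS by simp
  have DS: "Dnorm V E S = y"
    using facet_Dnorm(1)[OF finV symE irrE S] unfolding y_def n_def A_def .
  have Dfacet: "Dnorm V E (S - {v}) = y + real (card {w\<in>V. A w = {v}}) / n" if "v \<in> S" for v
    using facet_Dnorm(2)[OF finV symE irrE S that] DS unfolding n_def A_def by simp
  have sum_eq:
    "(\<Sum>T\<in>cliques_in V E t S. Dminus \<beta> V E T) = real (card C) * c + real (card U) * y + q"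
  proof -
    have "(\<Sum>v\<in>U. Dnorm V E (S - {v})) = real (card U) * y + q"
      using Dfacet unfolding U_def q_def by (simp add: sum.distrib sum_divide_distrib)
    then show ?thesis
      using facet_sum[OF S] sum_min_split[OF finS] unfolding C_def U_def c_def by simp
  qed
  have few: "\<forall>x\<in>C \<union> U. real (card {w\<in>V. x \<in> A w}) \<le> \<beta> * n"
  proof
    fix x assume x: "x \<in> C \<union> U"
    then have "{w\<in>V. x \<in> A w} = {w\<in>V. \<not> E w x}" unfolding A_def using CU by auto
    then show "real (card {w\<in>V. x \<in> A w}) \<le> \<beta> * n"
      using non_neighbours_bound[OF finV symE mindeg] x CU SV unfolding n_def by auto
  qed
  have sub: "A w \<subseteq> C \<union> U" for w unfolding A_def using CU by auto
  note count = cover_count[OF finV CU(1-3) sub few, folded n_def]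
  have two: "2 \<le> 2 * y + q + (2 * real (card C) + real (card U)) * \<beta>"
    using count(1) npos unfolding y_def q_def by (simp add: field_simps)
  have one: "1 \<le> y + q + real (card C) * \<beta>" if "card U \<le> 1"
    using count(2)[OF that] npos unfolding y_def q_def by (simp add: field_simps)
  have DmS: "Dminus \<beta> V E S = min y (c - \<beta>)"
    unfolding Dminus_def DS c_def cardS by (simp add: algebra_simps)
  have "0 \<le> q" unfolding q_def using npos by (simp add: sum_nonneg)
  moreover have "1 \<le> c + real t * \<beta>"
    using pval_bound[OF bpos] unfolding c_def by (simp add: algebra_simps)
  ultimately show ?thesis
    unfolding sum_eq DmS by (rule facet_arith[OF cardCU t1 _ _ two one])
qed

(* Absorption identity (k+1) C(n,k+1) = (n-k) C(n,k), valid in the reals for all n, k. *)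
lemma real_binomial_absorption:
  "real (Suc k) * real (n choose Suc k) = (real n - real k) * real (n choose k)"
proof (cases "k \<le> n")
  case True
  have "Suc k * (n choose Suc k) = (n - k) * (n choose k)"
    by (simp only: binomial_absorption binomial_absorb_comp)
  then have "real (Suc k * (n choose Suc k)) = real ((n - k) * (n choose k))" by (rule arg_cong)
  then show ?thesis using True by (simp add: of_nat_diff algebra_simps)
qed (simp add: binomial_eq_0)

definition clique_sum_bound :: "real \<Rightarrow> nat \<Rightarrow> nat \<Rightarrow> real \<Rightarrow> real" where
  "clique_sum_bound \<beta> s t x = (1 - \<beta>) * real s * real ((s - 2) choose (t - 1))
     - real (t - 1) * real ((s - 1) choose t) + real ((s - 2) choose (t - 2)) * x"

lemma clique_sum_bound_top: "2 \<le> s \<Longrightarrow> clique_sum_bound \<beta> s s x = x"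
  unfolding clique_sum_bound_def by (simp add: binomial_eq_0)

lemma clique_sum_bound_step:
  assumes "2 \<le> t" "t < s"
  shows "real (s - t) * clique_sum_bound \<beta> s t x
       = real (s choose (t + 1)) * (2 - real (t + 1) * \<beta>) + real (t - 1) * clique_sum_bound \<beta> s (t + 1) x"
proof -
  define a where "a = s - 2"
  define j where "j = t - 2"
  have s: "s = Suc (Suc a)" and t: "t = Suc (Suc j)" and ja: "j < a"
    using assms unfolding a_def j_def by auto
  define Y :: "nat \<Rightarrow> real" where "Y i = real (a choose (j + i))" for i
  have R1: "(real j + 1) * Y 1 = (real a - real j) * Y 0"
    and R2: "(real j + 2) * Y 2 = (real a - real j - 1) * Y 1"
    and R3: "(real j + 3) * Y 3 = (real a - real j - 2) * Y 2"
    using real_binomial_absorption[of j a] real_binomial_absorption[of "Suc j" a]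
      real_binomial_absorption[of "Suc (Suc j)" a]
    unfolding Y_def by (simp_all add: numeral_3_eq_3 numeral_2_eq_2 algebra_simps)
  have "(real a - real j) * ((1 - \<beta>) * (real a + 2) * Y 1 - (real j + 1) * (Y 1 + Y 2) + Y 0 * x)
      = (Y 1 + 2 * Y 2 + Y 3) * (2 - (real j + 3) * \<beta>)
        + (real j + 1) * ((1 - \<beta>) * (real a + 2) * Y 2 - (real j + 2) * (Y 2 + Y 3) + Y 1 * x)"
    using R1 R2 R3 by algebra
  then show ?thesis
    using ja unfolding clique_sum_bound_def s t Y_def
    by (simp add: numeral_3_eq_3 numeral_2_eq_2 of_nat_diff algebra_simps)
qed

lemma clique_sum_lower_bound:
  fixes V :: "'a set" and E :: "'a \<Rightarrow> 'a \<Rightarrow> bool" and \<beta> :: real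
  assumes finV: "finite V" and symE: "\<And>x y. E x y \<Longrightarrow> E y x" and irrE: "\<And>x. \<not> E x x"
    and bpos: "0 < \<beta>"
    and mindeg: "\<And>v. v \<in> V \<Longrightarrow> real (card {u \<in> V. E v u}) \<ge> (1 - \<beta>) * real (card V)"
    and S: "S \<in> cliques V E s" and t: "2 \<le> t" "t \<le> s"
  shows "clique_sum_bound \<beta> s t (Dminus \<beta> V E S) \<le> (\<Sum>T\<in>cliques_in V E t S. Dminus \<beta> V E T)"
  using t(2)
proof (induction rule: inc_induct)
  case base
  have finS: "finite S" and cardS: "card S = s" using S unfolding cliques_def by auto
  have "cliques_in V E s S = {S}"
    using cliques_in_of_clique[OF S] card_subset_eq[OF finS] cardS by auto
  then show ?case using clique_sum_bound_top t by simp
next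
  case (step n)
  define x where "x = Dminus \<beta> V E S"
  have n: "2 \<le> n" "n < s" using step.hyps t by auto
  have finS: "finite S" and cardS: "card S = s" using S unfolding cliques_def by auto
  have R: "R \<in> cliques V E (Suc n)" if "R \<in> cliques_in V E (Suc n) S" for R
    using that unfolding cliques_in_def by simp
  have "real (s - n) * clique_sum_bound \<beta> s n x
      = real (s choose (n + 1)) * (2 - real (n + 1) * \<beta>) + real (n - 1) * clique_sum_bound \<beta> s (n + 1) x"
    by (rule clique_sum_bound_step[OF n])
  also have "\<dots> \<le> real (s choose (n + 1)) * (2 - real (n + 1) * \<beta>)
        + real (n - 1) * (\<Sum>R\<in>cliques_in V E (Suc n) S. Dminus \<beta> V E R)"
    using step.IH unfolding x_def by (simp add: mult_left_mono)
  also have "\<dots> = (\<Sum>R\<in>cliques_in V E (Suc n) S.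
                       2 - real (n + 1) * \<beta> + real (n - 1) * Dminus \<beta> V E R)"
    using cliques_in_of_clique[OF S] n_subsets[OF finS] cardS
    by (simp add: sum.distrib sum_distrib_left)
  also have "\<dots> \<le> (\<Sum>R\<in>cliques_in V E (Suc n) S. \<Sum>T\<in>cliques_in V E n R. Dminus \<beta> V E T)"
    using facet_inequality[OF finV symE irrE bpos mindeg R] n by (intro sum_mono) simp
  also have "\<dots> = (\<Sum>R\<in>{R. R \<subseteq> S \<and> card R = Suc n}.
                       \<Sum>T\<in>{T. T \<subseteq> R \<and> card T = n}. Dminus \<beta> V E T)"
    using cliques_in_of_clique[OF R] by (intro sum.cong) (auto simp: cliques_in_of_clique[OF S])
  also have "\<dots> = real (s - n) * (\<Sum>T\<in>cliques_in V E n S. Dminus \<beta> V E T)"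
    using double_count_subsets[OF finS] cardS by (simp add: cliques_in_of_clique[OF S])
  finally show ?case using n unfolding x_def by simp
qed

theorem mainTheorem11:
  fixes V :: "'a set" and E :: "'a \<Rightarrow> 'a \<Rightarrow> bool" and \<beta> :: real
  assumes finV: "finite V"
    and symE: "\<And>x y. E x y \<Longrightarrow> E y x"
    and irrE: "\<And>x. \<not> E x x"
    and beta: "0 < \<beta>" "\<beta> < 1"
    and mindeg: "\<And>v. v \<in> V \<Longrightarrow> real (card {u \<in> V. E v u}) \<ge> (1 - \<beta>) * real (card V)"
  shows "(\<forall>s t S. 2 \<le> t \<and> t < s \<and> s \<le> pval \<beta> + 1 \<and> S \<in> cliques V E s \<longrightarrow>
            (\<Sum>T\<in>cliques_in V E t S. Dminus \<beta> V E T)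
              \<ge> (1 - \<beta>) * real s * real ((s - 2) choose (t - 1))
                 - real (t - 1) * real ((s - 1) choose t)
                 + real ((s - 2) choose (t - 2)) * Dminus \<beta> V E S)
       \<and> (\<forall>t S. 2 \<le> t \<and> t \<le> pval \<beta> \<and> S \<in> cliques V E (t + 1) \<longrightarrow> Dtilde \<beta> V E t S \<ge> 0)"
proof (intro conjI allI impI)
  fix s t S assume "2 \<le> t \<and> t < s \<and> s \<le> pval \<beta> + 1 \<and> S \<in> cliques V E s"
  then show "(\<Sum>T\<in>cliques_in V E t S. Dminus \<beta> V E T)
              \<ge> (1 - \<beta>) * real s * real ((s - 2) choose (t - 1))
                 - real (t - 1) * real ((s - 1) choose t)
                 + real ((s - 2) choose (t - 2)) * Dminus \<beta> V E S"
    using clique_sum_lower_bound[OF finV symE irrE beta(1) mindeg, of S s t]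
    unfolding clique_sum_bound_def by simp
next
  fix t S assume "2 \<le> t \<and> t \<le> pval \<beta> \<and> S \<in> cliques V E (t + 1)"
  then show "Dtilde \<beta> V E t S \<ge> 0"
    using facet_inequality[OF finV symE irrE beta(1) mindeg, of S t]
    unfolding Dtilde_def by simp
qed

end
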